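(* Let $h>0$ be such that $D(q):=\big(I_d+\frac{h^2}{2}\nabla^2F(q)M\big)^{-1}$ exists for every $q\in\mathbb{R}^d$. Then for every $n\ge 1$ and every fixed realization of the Wiener increments, the map $(p,q)\mapsto(P^h[n],Q^h[n])$ defined by the scheme started at $(P^h[0],Q^h[0])=(p,q)$ has Jacobian determinant $$\det\frac{\partial(P^h[n],Q^h[n])}{\partial(p,q)}=e^{-v t_n d},\qquad t_n=nh.$$
   Context: Let $d\le m$, $F\in C^\infty(\mathbb{R}^d,\mathbb{R})$, $f=\nabla F$, $M\in\mathbb{R}^{d\times d}$ symmetric positive definite, $v>0$, $\sigma=(\sigma_1,\dots,\sigma_m)\in\mathbb{R}^{d\times m}$, $W$ a standard $m$-dimensional Wiener process. For a step size $h>0$, $t_n=nh$, $\Delta_{n+1}W=W(t_{n+1})-W(t_n)$, the scheme is $$P^h[n+1]=e^{-vh}P^h[n]-\tfrac{h^2}{2}\nabla^2F(Q^h[n])MP^h[n+1]-h\big(1+\tfrac{vh}{2}\big)e^{-vh}f(Q^h[n])-\big(1+\tfrac{vh}{2}\big)e^{-vh}\sigma\Delta_{n+1}W,$$ $$Q^h[n+1]=Q^h[n]+h\big(1-\tfrac{vh}{2}\big)e^{vh}MP^h[n+1]+\tfrac{h^2}{2}Mf(Q^h[n])+\tfrac{h}{2}M\sigma\Delta_{n+1}W,$$ with the first equation solved for $P^h[n+1]$. *)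

theory Defs
  imports "HOL-Analysis.Analysis"
begin

fun Ck :: "nat \<Rightarrow> ('a::real_normed_vector \<Rightarrow> 'b::real_normed_vector) \<Rightarrow> bool" where
  "Ck 0 g = continuous_on UNIV g"
| "Ck (Suc k) g = (continuous_on UNIV g \<and> (\<forall>x. g differentiable (at x)) \<and>
      (\<forall>u. Ck k (\<lambda>x. frechet_derivative g (at x) u)))"

definition smooth :: "('a::real_normed_vector \<Rightarrow> 'b::real_normed_vector) \<Rightarrow> bool" where
  "smooth g \<longleftrightarrow> (\<forall>k. Ck k g)"

definition grad :: "(real^'d \<Rightarrow> real) \<Rightarrow> real^'d \<Rightarrow> real^'d" where
  "grad F q = (\<chi> i. frechet_derivative F (at q) (axis i 1))"

definition hess :: "(real^'d \<Rightarrow> real) \<Rightarrow> real^'d \<Rightarrow> real^'d^'d" where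
  "hess F q = matrix (frechet_derivative (grad F) (at q))"

text \<open>One step of the scheme; the implicit P-equation is solved for P[n+1]
  using D(q) = (I + h^2/2 Hess F(q) M)^{-1}.\<close>
definition Dmat :: "(real^'d \<Rightarrow> real) \<Rightarrow> real^'d^'d \<Rightarrow> real \<Rightarrow> real^'d \<Rightarrow> real^'d^'d" where
  "Dmat F M h q = matrix_inv (mat 1 + (h^2/2) *\<^sub>R (hess F q ** M))"

definition stepP :: "(real^'d \<Rightarrow> real) \<Rightarrow> real^'d^'d \<Rightarrow> real \<Rightarrow> real^'m^'d \<Rightarrow> real
    \<Rightarrow> real^'m \<Rightarrow> real^'d \<Rightarrow> real^'d \<Rightarrow> real^'d" where
  "stepP F M v \<sigma> h w p q =
     Dmat F M h q *v (exp (- v * h) *\<^sub>R p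
        - (h * (1 + v * h/2) * exp (- v * h)) *\<^sub>R grad F q
        - ((1 + v * h/2) * exp (- v * h)) *\<^sub>R (\<sigma> *v w))"

definition stepQ :: "(real^'d \<Rightarrow> real) \<Rightarrow> real^'d^'d \<Rightarrow> real \<Rightarrow> real^'m^'d \<Rightarrow> real
    \<Rightarrow> real^'m \<Rightarrow> real^'d \<Rightarrow> real^'d \<Rightarrow> real^'d" where
  "stepQ F M v \<sigma> h w p q =
     q + (h * (1 - v * h/2) * exp (v * h)) *\<^sub>R (M *v stepP F M v \<sigma> h w p q)
       + (h^2/2) *\<^sub>R (M *v grad F q)
       + (h/2) *\<^sub>R (M *v (\<sigma> *v w))"

text \<open>The scheme: scheme ... dW n (p,q) = (P^h[n], Q^h[n]) started from (p,q),
  with dW (n+1) the Wiener increment W(t_{n+1}) - W(t_n).\<close>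
fun scheme :: "(real^'d \<Rightarrow> real) \<Rightarrow> real^'d^'d \<Rightarrow> real \<Rightarrow> real^'m^'d \<Rightarrow> real
    \<Rightarrow> (nat \<Rightarrow> real^'m) \<Rightarrow> nat \<Rightarrow> (real^'d) \<times> (real^'d) \<Rightarrow> (real^'d) \<times> (real^'d)" where
  "scheme F M v \<sigma> h dW 0 z = z"
| "scheme F M v \<sigma> h dW (Suc n) z =
     (let (p, q) = scheme F M v \<sigma> h dW n z
      in (stepP F M v \<sigma> h (dW (Suc n)) p q, stepQ F M v \<sigma> h (dW (Suc n)) p q))"

definition pack :: "(real^'d) \<times> (real^'d) \<Rightarrow> real^('d + 'd)" where
  "pack z = (\<chi> i. case i of Inl j \<Rightarrow> fst z $ j | Inr j \<Rightarrow> snd z $ j)"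

definition unpack :: "real^('d + 'd) \<Rightarrow> (real^'d) \<times> (real^'d)" where
  "unpack x = ((\<chi> j. x $ Inl j), (\<chi> j. x $ Inr j))"

end

theory Submission
  imports Defs
begin

text \<open>One step of the scheme is the composition of two shears of phase space: the momentum
  update, which at fixed q is the affine map p \<mapsto> D(q) (e^{-vh} p - c(q)), followed by the position
  update, which at fixed new momentum is q \<mapsto> q + h^2/2 M \<nabla>F(q) + const. A shear has a
  block-triangular Jacobian, so its determinant is that of its diagonal block:
  e^{-vhd} det D(q) for the first map and det (I + h^2/2 M \<nabla>^2F(q)) for the second.
  By Sylvester's identity det (I + XY) = det (I + YX) the latter is
  det (I + h^2/2 \<nabla>^2F(q) M) = 1 / det D(q), so every step has Jacobian determinant
  e^{-vhd}, and the chain rule multiplies these over the n steps.\<close>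

section \<open>Block matrices and determinants\<close>

definition block_matrix ::
    "'r^'a^'a \<Rightarrow> 'r^'b^'a \<Rightarrow> 'r^'a^'b \<Rightarrow> 'r^'b^'b \<Rightarrow> 'r^('a + 'b)^('a + 'b)" where
  "block_matrix A B C E =
     (\<chi> i j. case i of
        Inl a \<Rightarrow> (case j of Inl b \<Rightarrow> A $ a $ b | Inr b \<Rightarrow> B $ a $ b)
      | Inr a \<Rightarrow> (case j of Inl b \<Rightarrow> C $ a $ b | Inr b \<Rightarrow> E $ a $ b))"

lemma block_matrix_nth [simp]:
  "block_matrix A B C E $ Inl a $ Inl b = A $ a $ b"
  "block_matrix A B C E $ Inl a $ Inr b' = B $ a $ b'"
  "block_matrix A B C E $ Inr a' $ Inl b = C $ a' $ b"
  "block_matrix A B C E $ Inr a' $ Inr b' = E $ a' $ b'"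
  by (simp_all add: block_matrix_def)

lemma block_matrix_eqI:
  assumes "\<And>a b. X $ Inl a $ Inl b = A $ a $ b" "\<And>a b. X $ Inl a $ Inr b = B $ a $ b"
    "\<And>a b. X $ Inr a $ Inl b = C $ a $ b" "\<And>a b. X $ Inr a $ Inr b = E $ a $ b"
  shows "X = block_matrix A B C E"
  unfolding vec_eq_iff
proof (intro allI)
  show "X $ i $ j = block_matrix A B C E $ i $ j" for i j
    by (cases i; cases j) (simp_all add: assms)
qed

lemma sum_UNIV_Plus:
  fixes f :: "'a::finite + 'b::finite \<Rightarrow> 'c::comm_monoid_add"
  shows "sum f UNIV = (\<Sum>k\<in>UNIV. f (Inl k)) + (\<Sum>k\<in>UNIV. f (Inr k))"
  using sum.Plus[of "UNIV::'a set" "UNIV::'b set" f] by (simp add: o_def)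

lemma prod_UNIV_Plus:
  fixes f :: "'a::finite + 'b::finite \<Rightarrow> 'c::comm_monoid_mult"
  shows "prod f UNIV = (\<Prod>k\<in>UNIV. f (Inl k)) * (\<Prod>k\<in>UNIV. f (Inr k))"
  using prod.Plus[of "UNIV::'a set" "UNIV::'b set" f] by (simp add: o_def)

lemma block_matrix_mult:
  fixes A :: "'r::semiring_1^'a::finite^'a" and E :: "'r^'b::finite^'b"
  shows "block_matrix A B C E ** block_matrix A' B' C' E' =
    block_matrix (A ** A' + B ** C') (A ** B' + B ** E') (C ** A' + E ** C') (C ** B' + E ** E')"
  by (rule block_matrix_eqI) (simp_all add: matrix_matrix_mult_def sum_UNIV_Plus)

lemma map_sum_permutes:
  assumes "p permutes UNIV" and "q permutes UNIV"
  shows "map_sum p q permutes UNIV"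
proof (rule bij_imp_permutes)
  show "bij (map_sum p q)"
    by (rule o_bij[of "map_sum (inv p) (inv q)"])
      (simp_all add: map_sum.comp permutes_inv_o[OF assms(1)] permutes_inv_o[OF assms(2)] sum.map_id0)
qed simp

lemma inj_map_sum_pair: "inj (\<lambda>(p :: 'a \<Rightarrow> 'c, q :: 'b \<Rightarrow> 'd). map_sum p q)"
proof (rule injI, clarify)
  fix p p' :: "'a \<Rightarrow> 'c" and q q' :: "'b \<Rightarrow> 'd" assume eq: "map_sum p q = map_sum p' q'"
  have "p x = p' x" "q y = q' y" for x y
    using fun_cong[OF eq, of "Inl x"] fun_cong[OF eq, of "Inr y"] by simp_all
  then show "p = p' \<and> q = q'" by auto
qed

lemma sign_map_sum:
  assumes "p permutes (UNIV :: 'a::finite set)" and "q permutes (UNIV :: 'b::finite set)"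
  shows "sign (map_sum p q) = sign p * sign q"
proof -
  have left: "map_sum p (id :: 'b \<Rightarrow> 'b) = map_permutation UNIV Inl p"
  proof
    show "map_sum p (id :: 'b \<Rightarrow> 'b) x = map_permutation UNIV Inl p x" for x
      by (cases x) (auto simp: map_permutation_def restrict_id_def)
  qed
  have right: "map_sum (id :: 'a \<Rightarrow> 'a) q = map_permutation UNIV Inr q"
  proof
    show "map_sum (id :: 'a \<Rightarrow> 'a) q x = map_permutation UNIV Inr q x" for x
      by (cases x) (auto simp: map_permutation_def restrict_id_def)
  qed
  have perm: "permutation (map_sum p (id :: 'b \<Rightarrow> 'b))" "permutation (map_sum (id :: 'a \<Rightarrow> 'a) q)"
    unfolding left right
    by (rule permutes_imp_permutation[OF _ map_permutation_permutes], simp_all add: bij_betw_def assms)+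
  have "sign (map_sum p q) = sign (map_sum p (id :: 'b \<Rightarrow> 'b) \<circ> map_sum (id :: 'a \<Rightarrow> 'a) q)"
    by (simp add: map_sum.comp)
  also have "\<dots> = sign (map_sum p (id :: 'b \<Rightarrow> 'b)) * sign (map_sum (id :: 'a \<Rightarrow> 'a) q)"
    by (rule sign_compose[OF perm])
  also have "\<dots> = sign p * sign q"
    using assms by (simp add: left right sign_map_permutation)
  finally show ?thesis .
qed

lemma permutes_Plus_decompose:
  fixes p :: "'a::finite + 'b::finite \<Rightarrow> 'a + 'b"
  assumes p: "p permutes UNIV" and Inr_to_Inr: "\<And>b. p (Inr b) \<in> range Inr"
  obtains p1 p2 where "p1 permutes UNIV" "p2 permutes UNIV" "p = map_sum p1 p2"
proof -
  have "inj p" using p permutes_inj by blast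
  then have "p ` range Inr = range Inr"
    using Inr_to_Inr by (intro endo_inj_surj) (auto intro: inj_on_subset)
  then have Inl_to_Inl: "p (Inl a) \<in> range Inl" for a
  proof (cases "p (Inl a)")
    case (Inr b)
    then have "p (Inl a) \<in> p ` range Inr"
      using \<open>p ` range Inr = range Inr\<close> by simp
    with \<open>inj p\<close> show ?thesis by (auto simp: inj_image_mem_iff)
  qed simp
  define p1 where "p1 = projl \<circ> p \<circ> Inl"
  define p2 where "p2 = projr \<circ> p \<circ> Inr"
  have decomp: "p = map_sum p1 p2"
  proof
    show "p x = map_sum p1 p2 x" for x
    proof (cases x)
      case (Inl a)
      with Inl_to_Inl[of a] show ?thesis by (auto simp: p1_def)
    next
      case (Inr b)
      with Inr_to_Inr[of b] show ?thesis by (auto simp: p2_def)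
    qed
  qed
  have "inj (p \<circ> Inl)" "inj (p \<circ> Inr)"
    using \<open>inj p\<close> by (simp_all add: inj_compose)
  then have "inj p1" "inj p2"
    unfolding decomp map_sum_o_inj by (auto dest: inj_on_imageI2)
  then have "bij p1" "bij p2"
    by (simp_all add: bij_def finite_UNIV_inj_surj)
  then have "p1 permutes UNIV" "p2 permutes UNIV"
    by (blast intro: bij_imp_permutes)+
  with decomp that show ?thesis by blast
qed

lemma det_block_upper_triangular:
  fixes A :: "'r::comm_ring_1^'a::finite^'a" and E :: "'r^'b::finite^'b"
  shows "det (block_matrix A B 0 E) = det A * det E"
proof -
  let ?X = "block_matrix A B 0 E"
  let ?t = "\<lambda>p. of_int (sign p) * (\<Prod>i\<in>UNIV. ?X $ i $ p i)"
  let ?P = "{p. p permutes (UNIV :: 'a set)} \<times> {p. p permutes (UNIV :: 'b set)}"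
  \<comment> \<open>Because of the zero block only permutations keeping the second summand in place
    contribute, and these are exactly the permutations map_sum p1 p2.\<close>
  define S where "S = {p. p permutes (UNIV :: ('a + 'b) set) \<and> (\<forall>b. p (Inr b) \<in> range Inr)}"
  have vanish: "?t p = 0" if "p \<notin> S" "p permutes UNIV" for p
  proof -
    from that obtain b where "p (Inr b) \<notin> range Inr"
      unfolding S_def by blast
    then obtain a where "p (Inr b) = Inl a"
      by (cases "p (Inr b)") auto
    then have "(\<Prod>i\<in>UNIV. ?X $ i $ p i) = 0"
      by (intro prod_zero bexI[of _ "Inr b"]) simp_all
    then show ?thesis by simp
  qed
  have S_image: "S = (\<lambda>(p1, p2). map_sum p1 p2) ` ?P"
  proof (intro equalityI subsetI)
    fix p assume "p \<in> S"
    then obtain p1 p2 where "p1 permutes UNIV" "p2 permutes UNIV" "p = map_sum p1 p2"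
      unfolding S_def by (auto elim: permutes_Plus_decompose)
    then show "p \<in> (\<lambda>(p1, p2). map_sum p1 p2) ` ?P" by auto
  qed (auto simp: S_def map_sum_permutes)
  have "det ?X = sum ?t {p. p permutes UNIV}"
    by (simp add: det_def)
  also have "\<dots> = sum ?t S"
    by (rule sum.mono_neutral_right) (auto simp: S_def finite_permutations vanish)
  also have "\<dots> = (\<Sum>(p1, p2)\<in>?P. ?t (map_sum p1 p2))"
    unfolding S_image
    by (subst sum.reindex[OF inj_on_subset[OF inj_map_sum_pair subset_UNIV]]) (simp add: case_prod_unfold)
  also have "\<dots> = (\<Sum>(p1, p2)\<in>?P. (of_int (sign p1) * (\<Prod>i\<in>UNIV. A $ i $ p1 i)) *
                                          (of_int (sign p2) * (\<Prod>i\<in>UNIV. E $ i $ p2 i)))"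
  proof (rule sum.cong[OF refl], clarsimp)
    fix p1 p2 assume "p1 permutes (UNIV :: 'a set)" "p2 permutes (UNIV :: 'b set)"
    then show "?t (map_sum p1 p2) = of_int (sign p1) * (\<Prod>i\<in>UNIV. A $ i $ p1 i) *
        (of_int (sign p2) * (\<Prod>i\<in>UNIV. E $ i $ p2 i))"
      by (simp add: sign_map_sum prod_UNIV_Plus mult_ac)
  qed
  also have "\<dots> = det A * det E"
    by (simp add: det_def sum_product sum.cartesian_product)
  finally show ?thesis .
qed

lemma det_block_lower_triangular:
  fixes A :: "'r::comm_ring_1^'a::finite^'a" and E :: "'r^'b::finite^'b"
  shows "det (block_matrix A 0 C E) = det A * det E"
proof -
  have "transpose (block_matrix A 0 C E) = block_matrix (transpose A) (transpose C) 0 (transpose E)"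
    by (rule block_matrix_eqI) (simp_all add: transpose_def)
  then have "det (transpose (block_matrix A 0 C E)) = det A * det E"
    by (simp add: det_block_upper_triangular)
  then show ?thesis
    by simp
qed

lemma det_scaleR: "det (c *\<^sub>R A) = c ^ CARD('n) * det (A :: real^'n::finite^'n)"
proof -
  have "c *\<^sub>R A = (c *\<^sub>R mat 1) ** A"
    by (metis matrix_mul_lid scalar_matrix_assoc)
  moreover have "c *\<^sub>R (mat 1 :: real^'n^'n) = matrix ((*\<^sub>R) c)"
    by (simp add: matrix_scaleR mat_def vec_eq_iff)
  ultimately show ?thesis
    by (simp add: det_mul)
qed

lemma matrix_mul_minus_left: "(- A) ** B = - (A ** (B :: 'r::ring_1^'c^'b))"
  by (simp add: matrix_matrix_mult_def vec_eq_iff sum_negf)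

lemma matrix_mul_minus_right: "A ** (- B) = - (A ** (B :: 'r::ring_1^'c^'b))"
  by (simp add: matrix_matrix_mult_def vec_eq_iff sum_negf)

lemma matrix_add_rdistrib: "(A + B) ** C = A ** C + B ** (C :: 'r::semiring_1^'c^'b)"
  by (simp add: matrix_matrix_mult_def vec_eq_iff sum.distrib distrib_right)

lemma det_mat_1_add_mult_commute:
  fixes X :: "'r::comm_ring_1^'b::finite^'a::finite" and Y :: "'r^'a^'b"
  shows "det (mat 1 + X ** Y) = det (mat 1 + Y ** X)"
proof -
  have lower_upper: "block_matrix (mat 1) (- X) Y (mat 1) =
      block_matrix (mat 1) 0 Y (mat 1) ** block_matrix (mat 1) (- X) 0 (mat 1 + Y ** X)"
    and upper_lower: "block_matrix (mat 1) (- X) Y (mat 1) =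
      block_matrix (mat 1 + X ** Y) (- X) 0 (mat 1) ** block_matrix (mat 1) 0 Y (mat 1)"
    by (simp_all add: block_matrix_mult matrix_add_ldistrib matrix_add_rdistrib
        matrix_mul_minus_left matrix_mul_minus_right)
  have "det (mat 1 + X ** Y) = det (block_matrix (mat 1) (- X) Y (mat 1))"
    unfolding upper_lower det_mul det_block_upper_triangular det_block_lower_triangular by simp
  also have "\<dots> = det (mat 1 + Y ** X)"
    unfolding lower_upper det_mul det_block_upper_triangular det_block_lower_triangular by simp
  finally show ?thesis .
qed

section \<open>Differentiability\<close>

lemma has_derivative_vec_lambda:
  fixes f :: "'a::real_normed_vector \<Rightarrow> real^'n"
  assumes "\<And>i. ((\<lambda>x. f x $ i) has_derivative (\<lambda>h. f' h $ i)) (at a)"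
  shows "(f has_derivative f') (at a)"
proof (rule has_derivative_componentwise_within[THEN iffD2], rule ballI)
  fix b :: "real^'n" assume "b \<in> Basis"
  then obtain i where "b = axis i 1"
    using axis_inverse by blast
  then show "((\<lambda>x. f x \<bullet> b) has_derivative (\<lambda>x. f' x \<bullet> b)) (at a)"
    using assms by (simp add: inner_axis)
qed

lemma differentiable_vec_lambda:
  fixes f :: "'a::real_normed_vector \<Rightarrow> real^'n"
  assumes "\<And>i. (\<lambda>x. f x $ i) differentiable (at a)"
  shows "f differentiable (at a)"
proof -
  have "\<forall>i. \<exists>D. ((\<lambda>x. f x $ i) has_derivative D) (at a)"
    using assms unfolding differentiable_def by blast
  then obtain D where "\<And>i. ((\<lambda>x. f x $ i) has_derivative D i) (at a)"
    by (metis choice)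
  then have "(f has_derivative (\<lambda>h. \<chi> i. D i h)) (at a)"
    by (intro has_derivative_vec_lambda) simp
  then show ?thesis
    unfolding differentiable_def by blast
qed

lemma differentiable_vec_nth:
  fixes f :: "'a::real_normed_vector \<Rightarrow> real^'n"
  shows "f differentiable (at a) \<Longrightarrow> (\<lambda>x. f x $ i) differentiable (at a)"
  unfolding differentiable_def using bounded_linear.has_derivative[OF bounded_linear_vec_nth] by blast

lemma frechet_derivative_vec_nth:
  fixes f :: "'a::real_normed_vector \<Rightarrow> real^'n"
  assumes "f differentiable (at a)"
  shows "frechet_derivative f (at a) h $ i = frechet_derivative (\<lambda>x. f x $ i) (at a) h"
proof -
  have "((\<lambda>x. f x $ i) has_derivative (\<lambda>h. frechet_derivative f (at a) h $ i)) (at a)"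
    using assms by (intro bounded_linear.has_derivative[OF bounded_linear_vec_nth])
      (simp add: frechet_derivative_works)
  then show ?thesis
    by (simp add: frechet_derivative_at[symmetric])
qed

lemma differentiable_matrix_vector_mult:
  fixes f :: "'a::real_normed_vector \<Rightarrow> real^'n"
  shows "f differentiable (at x) \<Longrightarrow> (\<lambda>x. A *v f x) differentiable (at x)"
  unfolding differentiable_def
  using bounded_linear.has_derivative[OF matrix_vector_mul_bounded_linear] by blast

lemma differentiable_prod:
  fixes f :: "'i \<Rightarrow> 'a::real_normed_vector \<Rightarrow> real"
  shows "(\<And>i. i \<in> I \<Longrightarrow> f i differentiable (at a)) \<Longrightarrow> (\<lambda>x. \<Prod>i\<in>I. f i x) differentiable (at a)"
  by (induction I rule: infinite_finite_induct) simp_all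

lemma differentiable_det:
  fixes X :: "'a::real_normed_vector \<Rightarrow> real^'n^'n"
  assumes "\<And>i j. (\<lambda>y. X y $ i $ j) differentiable (at a)"
  shows "(\<lambda>y. det (X y)) differentiable (at a)"
proof -
  have "(\<lambda>y. \<Prod>i\<in>UNIV. X y $ i $ p i) differentiable (at a)" for p
    using assms by (rule differentiable_prod)
  then show ?thesis
    unfolding det_def by (simp add: finite_permutations)
qed

lemma matrix_inv:
  assumes "invertible A"
  shows "A ** matrix_inv A = mat 1" and "matrix_inv A ** A = mat 1"
proof -
  have "\<exists>A'. A ** A' = mat 1 \<and> A' ** A = mat 1"
    using assms unfolding invertible_def .
  from someI_ex[OF this] show "A ** matrix_inv A = mat 1" and "matrix_inv A ** A = mat 1"
    unfolding matrix_inv_def by auto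
qed

lemma differentiable_matrix_inv_mult:
  fixes A :: "'a::real_normed_vector \<Rightarrow> real^'n^'n" and u :: "'a \<Rightarrow> real^'n"
  assumes invertible: "\<And>y. invertible (A y)"
    and A_diff: "\<And>i j. (\<lambda>y. A y $ i $ j) differentiable (at a)"
    and u_diff: "u differentiable (at a)"
  shows "(\<lambda>y. matrix_inv (A y) *v u y) differentiable (at a)"
proof (rule differentiable_vec_lambda)
  fix k
  have "A y *v (matrix_inv (A y) *v u y) = u y" for y
    by (simp add: matrix_vector_mul_assoc matrix_inv(1)[OF invertible])
  \<comment> \<open>By Cramer's rule each component is a quotient of determinants.\<close>
  then have cramer_k: "(matrix_inv (A y) *v u y) $ k =
      det (\<chi> i j. if j = k then u y $ i else A y $ i $ j) / det (A y)" for y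
    using cramer[OF invertible_det_nz[THEN iffD1, OF invertible]] by simp
  have "(\<lambda>y. det (\<chi> i j. if j = k then u y $ i else A y $ i $ j)) differentiable (at a)"
  proof (rule differentiable_det)
    show "(\<lambda>y. (\<chi> i j. if j = k then u y $ i else A y $ i $ j) $ i $ j) differentiable (at a)" for i j
      by (cases "j = k") (simp_all add: A_diff differentiable_vec_nth[OF u_diff])
  qed
  moreover have "(\<lambda>y. det (A y)) differentiable (at a)"
    by (rule differentiable_det[OF A_diff])
  ultimately show "(\<lambda>y. (matrix_inv (A y) *v u y) $ k) differentiable (at a)"
    unfolding cramer_k using invertible invertible_det_nz by (intro differentiable_divide) auto
qed

lemma jacobian_compose:
  fixes f :: "real^'a \<Rightarrow> real^'b" and g :: "real^'b \<Rightarrow> real^'c"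
  assumes "f differentiable (at x)" and "g differentiable (at (f x))"
  shows "(g \<circ> f) differentiable (at x)"
    and "jacobian (g \<circ> f) (at x) = jacobian g (at (f x)) ** jacobian f (at x)"
proof -
  have "((g \<circ> f) has_derivative (\<lambda>h. jacobian g (at (f x)) *v (jacobian f (at x) *v h))) (at x)"
    using diff_chain_at[OF assms[unfolded jacobian_works]] by (simp add: o_def)
  then have "((g \<circ> f) has_derivative (\<lambda>h. (jacobian g (at (f x)) ** jacobian f (at x)) *v h)) (at x)"
    by (simp add: matrix_vector_mul_assoc)
  then show "(g \<circ> f) differentiable (at x)"
    and "jacobian (g \<circ> f) (at x) = jacobian g (at (f x)) ** jacobian f (at x)"
    by (auto simp: differentiable_def jacobian_def frechet_derivative_at[symmetric])
qed

lemma grad_differentiable: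
  fixes F :: "real^'d \<Rightarrow> real"
  assumes "smooth F"
  shows "grad F differentiable (at q)"
proof (rule differentiable_vec_lambda)
  fix i
  have "Ck (Suc (Suc 0)) F"
    using assms by (simp add: smooth_def)
  then show "(\<lambda>q. grad F q $ i) differentiable (at q)"
    by (simp add: grad_def)
qed

lemma grad_has_derivative_hess:
  fixes F :: "real^'d \<Rightarrow> real"
  assumes "smooth F"
  shows "(grad F has_derivative (\<lambda>h. hess F q *v h)) (at q)"
  using grad_differentiable[OF assms] by (simp add: hess_def jacobian_def[symmetric] jacobian_works)

lemma hess_nth_differentiable:
  fixes F :: "real^'d \<Rightarrow> real"
  assumes "smooth F"
  shows "(\<lambda>q. hess F q $ i $ j) differentiable (at q)"
proof -
  have "hess F q' $ i $ j =
      frechet_derivative (\<lambda>z. frechet_derivative F (at z) (axis i 1)) (at q') (axis j 1)" for q'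
    using frechet_derivative_vec_nth[OF grad_differentiable[OF assms]]
    by (simp add: hess_def matrix_def grad_def)
  moreover have "Ck (Suc (Suc (Suc 0))) F"
    using assms by (simp add: smooth_def)
  ultimately show ?thesis
    by simp
qed

section \<open>Jacobians of shears\<close>

lemma pack_nth [simp]: "pack (p, q) $ Inl i = p $ i" "pack (p, q) $ Inr i = q $ i"
  by (simp_all add: pack_def)

lemma unpack_pack [simp]: "unpack (pack z) = z"
  by (simp add: pack_def unpack_def)

lemma pack_unpack [simp]: "pack (unpack y) = y"
proof -
  have "pack (unpack y) $ i = y $ i" for i
    by (cases i) (simp_all add: pack_def unpack_def)
  then show ?thesis
    by (simp add: vec_eq_iff)
qed

lemma bounded_linear_pack: "bounded_linear pack"
  unfolding linear_conv_bounded_linear[symmetric]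
  by (rule linearI) (simp_all add: vec_eq_iff pack_def split: sum.split)

lemma bounded_linear_unpack: "bounded_linear unpack"
  unfolding linear_conv_bounded_linear[symmetric]
  by (rule linearI) (simp_all add: vec_eq_iff unpack_def)

lemma differentiable_unpack:
  "(\<lambda>y. fst (unpack y)) differentiable (at y)" "(\<lambda>y. snd (unpack y)) differentiable (at y)"
  by (simp_all add: bounded_linear_imp_differentiable bounded_linear_fst_comp bounded_linear_snd_comp
      bounded_linear_unpack)

lemmas has_derivative_pack [derivative_intros] = bounded_linear.has_derivative[OF bounded_linear_pack]
lemmas has_derivative_unpack [derivative_intros] = bounded_linear.has_derivative[OF bounded_linear_unpack]

lemma matrix_eq_block_matrix:
  fixes L :: "real^('d::finite + 'd) \<Rightarrow> real^('d + 'd)"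
  assumes "\<And>dp dq. L (pack (dp, dq)) = pack (A *v dp + B *v dq, C *v dp + E *v dq)"
  shows "matrix L = block_matrix A B C E"
proof -
  have "axis (Inl j) 1 = pack (axis j 1, 0)" "axis (Inr j) 1 = pack (0, axis j 1)" for j :: 'd
    by (simp_all add: vec_eq_iff pack_def axis_def split: sum.split)
  then show ?thesis
    by (intro block_matrix_eqI) (simp_all add: matrix_def assms matrix_vector_mult_basis column_def)
qed

lemma has_derivative_pack_left:
  "((\<lambda>p. pack (p, q)) has_derivative (\<lambda>dp. pack (dp, 0))) (at p)"
  by (auto intro!: derivative_eq_intros)

lemma has_derivative_pack_right:
  "((\<lambda>q. pack (p, q)) has_derivative (\<lambda>dq. pack (0, dq))) (at q)"
  by (auto intro!: derivative_eq_intros)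

lemma linear_pack_blocks:
  fixes G :: "real^('d::finite + 'd) \<Rightarrow> real^'e"
  assumes "linear G"
  shows "G (pack (dp, dq)) = matrix (\<lambda>dp. G (pack (dp, 0))) *v dp + matrix (\<lambda>dq. G (pack (0, dq))) *v dq"
proof -
  have "pack (dp, dq) = pack (dp, 0) + pack (0, dq)"
    by (simp add: vec_eq_iff pack_def split: sum.split)
  moreover have "linear (\<lambda>dp. G (pack (dp, 0)))"
    using has_derivative_linear[OF has_derivative_pack_left] assms by (rule linear_compose[unfolded o_def])
  moreover have "linear (\<lambda>dq. G (pack (0, dq)))"
    using has_derivative_linear[OF has_derivative_pack_right] assms by (rule linear_compose[unfolded o_def])
  ultimately show ?thesis
    by (simp add: linear_add[OF assms] matrix_works)
qed

lemma jacobian_shear_left: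
  fixes g :: "real^('d::finite + 'd) \<Rightarrow> real^'d"
  assumes g: "g differentiable (at x)"
    and slice: "((\<lambda>p. g (pack (p, snd (unpack x)))) has_derivative (\<lambda>dp. B *v dp)) (at (fst (unpack x)))"
  shows "(\<lambda>y. pack (g y, snd (unpack y))) differentiable (at x)"
    and "det (jacobian (\<lambda>y. pack (g y, snd (unpack y))) (at x)) = det B"
proof -
  let ?G = "frechet_derivative g (at x)"
  have G: "(g has_derivative ?G) (at x)"
    using g frechet_derivative_works by blast
  then have "linear ?G"
    by (rule has_derivative_linear)
  have "((\<lambda>p. g (pack (p, snd (unpack x)))) has_derivative (\<lambda>dp. ?G (pack (dp, 0)))) (at (fst (unpack x)))"
    using diff_chain_at[OF has_derivative_pack_left, of g] G by (simp add: o_def)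
  with slice have left_block: "?G (pack (dp, 0)) = B *v dp" for dp
    by (metis has_derivative_unique)
  define Y where "Y = matrix (\<lambda>dq. ?G (pack (0, dq)))"
  have blocks: "?G (pack (dp, dq)) = B *v dp + Y *v dq" for dp dq
    using linear_pack_blocks[OF \<open>linear ?G\<close>, of dp dq] by (simp add: left_block Y_def)
  have deriv: "((\<lambda>y. pack (g y, snd (unpack y))) has_derivative
      (\<lambda>dy. pack (?G dy, snd (unpack dy)))) (at x)"
    using G by (auto intro!: derivative_eq_intros)
  then have "jacobian (\<lambda>y. pack (g y, snd (unpack y))) (at x) = block_matrix B Y 0 (mat 1)"
    unfolding jacobian_def frechet_derivative_at[OF deriv, symmetric]
    by (intro matrix_eq_block_matrix) (simp add: blocks)
  then show "det (jacobian (\<lambda>y. pack (g y, snd (unpack y))) (at x)) = det B"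
    by (simp add: det_block_upper_triangular)
  show "(\<lambda>y. pack (g y, snd (unpack y))) differentiable (at x)"
    using deriv by (rule differentiableI)
qed

lemma jacobian_shear_right:
  fixes g :: "real^('d::finite + 'd) \<Rightarrow> real^'d"
  assumes g: "g differentiable (at x)"
    and slice: "((\<lambda>q. g (pack (fst (unpack x), q))) has_derivative (\<lambda>dq. E *v dq)) (at (snd (unpack x)))"
  shows "(\<lambda>y. pack (fst (unpack y), g y)) differentiable (at x)"
    and "det (jacobian (\<lambda>y. pack (fst (unpack y), g y)) (at x)) = det E"
proof -
  let ?G = "frechet_derivative g (at x)"
  have G: "(g has_derivative ?G) (at x)"
    using g frechet_derivative_works by blast
  then have "linear ?G"
    by (rule has_derivative_linear)
  have "((\<lambda>q. g (pack (fst (unpack x), q))) has_derivative (\<lambda>dq. ?G (pack (0, dq)))) (at (snd (unpack x)))"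
    using diff_chain_at[OF has_derivative_pack_right, of g] G by (simp add: o_def)
  with slice have right_block: "?G (pack (0, dq)) = E *v dq" for dq
    by (metis has_derivative_unique)
  define Y where "Y = matrix (\<lambda>dp. ?G (pack (dp, 0)))"
  have blocks: "?G (pack (dp, dq)) = Y *v dp + E *v dq" for dp dq
    using linear_pack_blocks[OF \<open>linear ?G\<close>, of dp dq] by (simp add: right_block Y_def)
  have deriv: "((\<lambda>y. pack (fst (unpack y), g y)) has_derivative
      (\<lambda>dy. pack (fst (unpack dy), ?G dy))) (at x)"
    using G by (auto intro!: derivative_eq_intros)
  then have "jacobian (\<lambda>y. pack (fst (unpack y), g y)) (at x) = block_matrix (mat 1) 0 Y E"
    unfolding jacobian_def frechet_derivative_at[OF deriv, symmetric]
    by (intro matrix_eq_block_matrix) (simp add: blocks)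
  then show "det (jacobian (\<lambda>y. pack (fst (unpack y), g y)) (at x)) = det E"
    by (simp add: det_block_lower_triangular)
  show "(\<lambda>y. pack (fst (unpack y), g y)) differentiable (at x)"
    using deriv by (rule differentiableI)
qed

section \<open>One step of the scheme\<close>

definition momentum_update ::
    "(real^'d \<Rightarrow> real) \<Rightarrow> real^'d^'d \<Rightarrow> real \<Rightarrow> real^'m^'d \<Rightarrow> real \<Rightarrow> real^'m
      \<Rightarrow> real^('d + 'd) \<Rightarrow> real^'d" where
  "momentum_update F M v \<sigma> h w y = stepP F M v \<sigma> h w (fst (unpack y)) (snd (unpack y))"

definition position_update ::
    "(real^'d \<Rightarrow> real) \<Rightarrow> real^'d^'d \<Rightarrow> real \<Rightarrow> real^'m^'d \<Rightarrow> real \<Rightarrow> real^'m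
      \<Rightarrow> real^('d + 'd) \<Rightarrow> real^'d" where
  "position_update F M v \<sigma> h w z =
     snd (unpack z) + (h * (1 - v * h/2) * exp (v * h)) *\<^sub>R (M *v fst (unpack z))
       + (h^2/2) *\<^sub>R (M *v grad F (snd (unpack z)))
       + (h/2) *\<^sub>R (M *v (\<sigma> *v w))"

definition scheme_step ::
    "(real^'d \<Rightarrow> real) \<Rightarrow> real^'d^'d \<Rightarrow> real \<Rightarrow> real^'m^'d \<Rightarrow> real \<Rightarrow> real^'m
      \<Rightarrow> real^('d + 'd) \<Rightarrow> real^('d + 'd)" where
  "scheme_step F M v \<sigma> h w y =
     pack (stepP F M v \<sigma> h w (fst (unpack y)) (snd (unpack y)),
           stepQ F M v \<sigma> h w (fst (unpack y)) (snd (unpack y)))"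

lemma pack_scheme_Suc:
  "pack (scheme F M v \<sigma> h dW (Suc n) z) = scheme_step F M v \<sigma> h (dW (Suc n)) (pack (scheme F M v \<sigma> h dW n z))"
  by (cases "scheme F M v \<sigma> h dW n z") (simp add: scheme_step_def)

lemma scheme_step_split:
  "scheme_step F M v \<sigma> h w =
     (\<lambda>z. pack (fst (unpack z), position_update F M v \<sigma> h w z)) \<circ>
     (\<lambda>y. pack (momentum_update F M v \<sigma> h w y, snd (unpack y)))"
  by (simp add: fun_eq_iff scheme_step_def momentum_update_def position_update_def stepQ_def)

lemma momentum_update_differentiable:
  fixes F :: "real^'d \<Rightarrow> real"
  assumes F: "smooth F" and D_ex: "\<And>q. invertible (mat 1 + (h^2/2) *\<^sub>R (hess F q ** M))"
  shows "momentum_update F M v \<sigma> h w differentiable (at y)"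
proof -
  have "(\<lambda>y. (mat 1 + (h^2/2) *\<^sub>R (hess F (snd (unpack y)) ** M)) $ i $ j) differentiable (at y)" for i j
    using differentiable_compose[OF hess_nth_differentiable[OF F] differentiable_unpack(2)]
    by (simp add: matrix_matrix_mult_def)
  moreover have "(\<lambda>y. exp (- v * h) *\<^sub>R fst (unpack y) - (h * (1 + v * h/2) * exp (- v * h)) *\<^sub>R grad F (snd (unpack y))
      - ((1 + v * h/2) * exp (- v * h)) *\<^sub>R (\<sigma> *v w)) differentiable (at y)"
    using differentiable_compose[OF grad_differentiable[OF F] differentiable_unpack(2)]
    by (intro differentiable_diff differentiable_scaleR differentiable_const differentiable_unpack)
  ultimately show ?thesis
    unfolding momentum_update_def[abs_def] stepP_def Dmat_def
    by (intro differentiable_matrix_inv_mult D_ex)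
qed

lemma momentum_update_slice:
  "((\<lambda>p. momentum_update F M v \<sigma> h w (pack (p, q))) has_derivative
     (\<lambda>dp. (exp (- v * h) *\<^sub>R Dmat F M h q) *v dp)) (at p)"
proof -
  have "((\<lambda>p. exp (- v * h) *\<^sub>R p - (h * (1 + v * h/2) * exp (- v * h)) *\<^sub>R grad F q
      - ((1 + v * h/2) * exp (- v * h)) *\<^sub>R (\<sigma> *v w)) has_derivative (\<lambda>dp. exp (- v * h) *\<^sub>R dp)) (at p)"
    by (auto intro!: derivative_eq_intros)
  from bounded_linear.has_derivative[OF matrix_vector_mul_bounded_linear this, of "Dmat F M h q"]
  show ?thesis
    by (simp add: momentum_update_def stepP_def matrix_vector_mult_scaleR scaleR_matrix_vector_assoc)
qed

lemma position_update_differentiable: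
  fixes F :: "real^'d \<Rightarrow> real"
  assumes F: "smooth F"
  shows "position_update F M v \<sigma> h w differentiable (at z)"
  unfolding position_update_def[abs_def]
  by (intro differentiable_add differentiable_scaleR differentiable_const differentiable_matrix_vector_mult
      differentiable_unpack differentiable_compose[OF grad_differentiable[OF F] differentiable_unpack(2)])

lemma position_update_slice:
  fixes F :: "real^'d \<Rightarrow> real"
  assumes F: "smooth F"
  shows "((\<lambda>q. position_update F M v \<sigma> h w (pack (p, q))) has_derivative
     (\<lambda>dq. (mat 1 + (h^2/2) *\<^sub>R (M ** hess F q)) *v dq)) (at q)"
  unfolding position_update_def
  by (auto intro!: derivative_eq_intros bounded_linear.has_derivative[OF matrix_vector_mul_bounded_linear]
      grad_has_derivative_hess[OF F]
      simp: matrix_vector_mult_add_rdistrib scaleR_matrix_vector_assoc matrix_vector_mul_assoc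
        scalar_matrix_assoc)

lemma det_Dmat_mult:
  assumes "invertible (mat 1 + (h^2/2) *\<^sub>R (hess F q ** M))"
  shows "det (Dmat F M h q) * det (mat 1 + (h^2/2) *\<^sub>R (M ** hess F q)) = 1"
proof -
  have "det (mat 1 + (h^2/2) *\<^sub>R (M ** hess F q)) = det (mat 1 + (h^2/2) *\<^sub>R (hess F q ** M))"
    using det_mat_1_add_mult_commute[of M "(h^2/2) *\<^sub>R hess F q"]
    by (simp add: matrix_scalar_ac scalar_matrix_assoc)
  moreover have "matrix_inv (mat 1 + (h^2/2) *\<^sub>R (hess F q ** M)) ** (mat 1 + (h^2/2) *\<^sub>R (hess F q ** M)) = mat 1"
    by (rule matrix_inv(2)[OF assms])
  ultimately show ?thesis
    unfolding Dmat_def by (metis det_I det_mul)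
qed

lemma scheme_step_jacobian:
  fixes F :: "real^'d \<Rightarrow> real"
  assumes F: "smooth F" and D_ex: "\<And>q. invertible (mat 1 + (h^2/2) *\<^sub>R (hess F q ** M))"
  shows "scheme_step F M v \<sigma> h w differentiable (at x)"
    and "det (jacobian (scheme_step F M v \<sigma> h w) (at x)) = exp (- v * h) ^ CARD('d)"
proof -
  let ?S1 = "\<lambda>y. pack (momentum_update F M v \<sigma> h w y, snd (unpack y))"
  let ?S2 = "\<lambda>z. pack (fst (unpack z), position_update F M v \<sigma> h w z)"
  let ?q = "snd (unpack x)"
  have S1: "?S1 differentiable (at x)"
    "det (jacobian ?S1 (at x)) = det (exp (- v * h) *\<^sub>R Dmat F M h ?q)"
    by (rule jacobian_shear_left[OF momentum_update_differentiable[OF F D_ex] momentum_update_slice])+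
  have "((\<lambda>q. position_update F M v \<sigma> h w (pack (fst (unpack (?S1 x)), q))) has_derivative
      (\<lambda>dq. (mat 1 + (h^2/2) *\<^sub>R (M ** hess F ?q)) *v dq)) (at (snd (unpack (?S1 x))))"
    using position_update_slice[OF F] by simp
  then have S2: "?S2 differentiable (at (?S1 x))"
    "det (jacobian ?S2 (at (?S1 x))) = det (mat 1 + (h^2/2) *\<^sub>R (M ** hess F ?q))"
    by (rule jacobian_shear_right[OF position_update_differentiable[OF F]])+
  show "scheme_step F M v \<sigma> h w differentiable (at x)"
    unfolding scheme_step_split using S1(1) S2(1) by (rule jacobian_compose)
  have "det (jacobian (scheme_step F M v \<sigma> h w) (at x)) =
      exp (- v * h) ^ CARD('d) * (det (Dmat F M h ?q) * det (mat 1 + (h^2/2) *\<^sub>R (M ** hess F ?q)))"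
    unfolding scheme_step_split jacobian_compose(2)[OF S1(1) S2(1)] det_mul S1(2) S2(2) det_scaleR
    by simp
  also have "\<dots> = exp (- v * h) ^ CARD('d)"
    by (simp add: det_Dmat_mult D_ex)
  finally show "det (jacobian (scheme_step F M v \<sigma> h w) (at x)) = exp (- v * h) ^ CARD('d)" .
qed

lemma scheme_jacobian:
  fixes F :: "real^'d \<Rightarrow> real"
  assumes F: "smooth F" and D_ex: "\<And>q. invertible (mat 1 + (h^2/2) *\<^sub>R (hess F q ** M))"
  shows "(\<lambda>y. pack (scheme F M v \<sigma> h dW n (unpack y))) differentiable (at x) \<and>
    det (jacobian (\<lambda>y. pack (scheme F M v \<sigma> h dW n (unpack y))) (at x)) = exp (- v * h) ^ (CARD('d) * n)"
proof (induction n arbitrary: x)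
  case 0
  have "jacobian (\<lambda>y. y) (at x) = mat 1"
    using frechet_derivative_at[OF has_derivative_ident] by (simp add: jacobian_def matrix_id_mat_1[unfolded id_def])
  then show ?case
    by simp
next
  case (Suc n)
  let ?Phi = "\<lambda>y. pack (scheme F M v \<sigma> h dW n (unpack y))"
  have split: "(\<lambda>y. pack (scheme F M v \<sigma> h dW (Suc n) (unpack y))) = scheme_step F M v \<sigma> h (dW (Suc n)) \<circ> ?Phi"
    by (simp only: fun_eq_iff pack_scheme_Suc o_def simp_thms)
  have Phi: "?Phi differentiable (at x)" "det (jacobian ?Phi (at x)) = exp (- v * h) ^ (CARD('d) * n)"
    using Suc.IH by blast+
  note step = scheme_step_jacobian[OF F D_ex, of v \<sigma> "dW (Suc n)" "?Phi x"]
  show ?case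
    unfolding split jacobian_compose(2)[OF Phi(1) step(1)] det_mul step(2) Phi(2)
    using jacobian_compose(1)[OF Phi(1) step(1)] by (simp add: power_add)
qed

theorem mainTheorem2:
  fixes F :: "real^'d \<Rightarrow> real"
    and M :: "real^'d^'d"
    and \<sigma> :: "real^'m^'d"
    and v h :: real
    and dW :: "nat \<Rightarrow> real^'m"
    and n :: nat
  assumes dm: "CARD('d) \<le> CARD('m)"
    and F_smooth: "smooth F"
    and M_sym: "transpose M = M"
    and M_pos: "\<forall>x. x \<noteq> 0 \<longrightarrow> x \<bullet> (M *v x) > 0"
    and v_pos: "v > 0"
    and h_pos: "h > 0"
    and D_ex: "\<forall>q. invertible (mat 1 + (h^2/2) *\<^sub>R (hess F q ** M))"
    and n_ge: "n \<ge> 1"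
  shows "\<forall>x::real^('d + 'd).
           (\<lambda>y. pack (scheme F M v \<sigma> h dW n (unpack y))) differentiable (at x) \<and>
           det (matrix (frechet_derivative (\<lambda>y. pack (scheme F M v \<sigma> h dW n (unpack y))) (at x)))
             = exp (- v * (real n * h) * real CARD('d))"
proof
  \<comment> \<open>Only smoothness of F and invertibility of D(q) are needed; the other hypotheses are not.\<close>
  fix x :: "real^('d + 'd)"
  have "exp (- v * h) ^ (CARD('d) * n) = exp (- v * (real n * h) * real CARD('d))"
    by (simp add: exp_of_nat_mult[symmetric] algebra_simps)
  with scheme_jacobian[OF F_smooth D_ex[rule_format], of v \<sigma> dW n x]
  show "(\<lambda>y. pack (scheme F M v \<sigma> h dW n (unpack y))) differentiable (at x) \<and>
      det (matrix (frechet_derivative (\<lambda>y. pack (scheme F M v \<sigma> h dW n (unpack y))) (at x)))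
        = exp (- v * (real n * h) * real CARD('d))"
    by (simp add: jacobian_def)
qed

end
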